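(* Assume (C1) and (C2). (i) There are positive constants $\rho$ and $\delta'$ such that $I(u)\ge\delta'$ for all $u\in\mathcal{D}$ with $\|u\|=\rho$. (ii) There is $\varphi\in\mathcal{D}\setminus\{0\}$ such that $I(t\varphi)\to-\infty$ as $t\to+\infty$.
   Context: Fix real numbers $p,q,r$ with $1<p<q$, $\frac p2$ a positive integer, and $r\ge1$, and functions $a,b,c:\mathbb{Z}\to(0,+\infty)$. Conditions: - (C1) There is $b_0>0$ with $b(n)\ge b_0$ for all $n$ and $b(n)\to+\infty$ as $|n|\to\infty$. - (C2) There is $c_0>0$ with $c(n)\le c_0$ for all $n$ and $\sum_n c(n)<+\infty$. Notation and spaces: - $\Delta u(n)=u(n+1)-u(n)$. - $E$ is the set of real sequences $u$ with $\|u\|:=\big(\sum_n[a(n)|\Delta u(n)|^p+b(n)|u(n)|^p]\big)^{1/p}<\infty$. - $\mathcal{D}=\{u\in E:\sum_n c(n)|u(n)|^q\ln|u(n)|^r<+\infty\}$, where terms with $u(n)=0$ are read as $0$. For $u\in\mathcal{D}$: $$I(u)=\frac1p\|u\|^p+\frac{r}{q^2}\sum_n c(n)|u(n)|^q-\frac1q\sum_n c(n)|u(n)|^q\ln|u(n)|^r.$$ *)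

theory Defs
  imports "HOL-Analysis.Analysis"
begin

definition fdiff :: "(int \<Rightarrow> real) \<Rightarrow> int \<Rightarrow> real" where
  "fdiff u n = u (n + 1) - u n"

definition E_term :: "real \<Rightarrow> (int \<Rightarrow> real) \<Rightarrow> (int \<Rightarrow> real) \<Rightarrow> (int \<Rightarrow> real) \<Rightarrow> int \<Rightarrow> real" where
  "E_term p a b u n = a n * \<bar>fdiff u n\<bar> powr p + b n * \<bar>u n\<bar> powr p"

definition Espace :: "real \<Rightarrow> (int \<Rightarrow> real) \<Rightarrow> (int \<Rightarrow> real) \<Rightarrow> (int \<Rightarrow> real) set" where
  "Espace p a b = {u. E_term p a b u summable_on UNIV}"

definition Enorm :: "real \<Rightarrow> (int \<Rightarrow> real) \<Rightarrow> (int \<Rightarrow> real) \<Rightarrow> (int \<Rightarrow> real) \<Rightarrow> real" where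
  "Enorm p a b u = (\<Sum>\<^sub>\<infinity>n. E_term p a b u n) powr (1 / p)"

text \<open>Summand c(n)|u(n)|^q ln |u(n)|^r; it is 0 when u(n) = 0 (0 powr q = 0).\<close>
definition log_term :: "real \<Rightarrow> real \<Rightarrow> (int \<Rightarrow> real) \<Rightarrow> (int \<Rightarrow> real) \<Rightarrow> int \<Rightarrow> real" where
  "log_term q r c u n = c n * \<bar>u n\<bar> powr q * ln (\<bar>u n\<bar> powr r)"

definition Dspace :: "real \<Rightarrow> real \<Rightarrow> real \<Rightarrow> (int \<Rightarrow> real) \<Rightarrow> (int \<Rightarrow> real) \<Rightarrow> (int \<Rightarrow> real) \<Rightarrow> (int \<Rightarrow> real) set" where
  "Dspace p q r a b c = {u \<in> Espace p a b. log_term q r c u summable_on UNIV}"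

definition Ifun :: "real \<Rightarrow> real \<Rightarrow> real \<Rightarrow> (int \<Rightarrow> real) \<Rightarrow> (int \<Rightarrow> real) \<Rightarrow> (int \<Rightarrow> real) \<Rightarrow> (int \<Rightarrow> real) \<Rightarrow> real" where
  "Ifun p q r a b c u =
     1 / p * Enorm p a b u powr p
     + r / q\<^sup>2 * (\<Sum>\<^sub>\<infinity>n. c n * \<bar>u n\<bar> powr q)
     - 1 / q * (\<Sum>\<^sub>\<infinity>n. log_term q r c u n)"

end

theory Submission
  imports Defs "HOL-Real_Asymp.Real_Asymp"
begin

text \<open>
  (i) Take \<open>\<rho> = min 1 b0\<close>. On the sphere \<open>\<parallel>u\<parallel> = \<rho>\<close> every coordinate satisfies
  \<open>b0 |u(n)|^p \<le> \<parallel>u\<parallel>^p = \<rho>^p \<le> b0\<close>, hence \<open>|u(n)| \<le> 1\<close>; then every logarithmic term is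
  nonpositive and \<open>I(u) \<ge> \<rho>^p/p\<close>.
  (ii) For the unit sequence \<open>\<phi>\<close> concentrated at one site all sums are finite, and
  \<open>I(t\<phi>) = K t^p/p + r c(0) t^q/q^2 - r c(0) t^q ln t / q\<close> with \<open>K = a(-1) + a(0) + b(0)\<close>,
  which tends to \<open>-\<infinity>\<close> because \<open>t^q ln t\<close> dominates \<open>t^q\<close> and \<open>t^p\<close> for \<open>p < q\<close>.
\<close>

lemma E_term_nonneg:
  assumes "a n \<ge> 0" "b n \<ge> 0"
  shows "E_term p a b u n \<ge> 0"
  using assms by (simp add: E_term_def)

lemma Enorm_powr:
  assumes "p > 0" "\<And>n. a n \<ge> 0" "\<And>n. b n \<ge> 0"
  shows "Enorm p a b u powr p = (\<Sum>\<^sub>\<infinity>n. E_term p a b u n)"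
proof -
  have "(\<Sum>\<^sub>\<infinity>n. E_term p a b u n) \<ge> 0"
    by (intro infsum_nonneg E_term_nonneg assms)
  thus ?thesis
    using assms(1) by (simp add: Enorm_def powr_powr)
qed

lemma b_abs_powr_le_Enorm_powr:
  assumes "p > 0" "\<And>n. a n \<ge> 0" "\<And>n. b n \<ge> 0" "u \<in> Espace p a b"
  shows "b n * \<bar>u n\<bar> powr p \<le> Enorm p a b u powr p"
proof -
  have "b n * \<bar>u n\<bar> powr p \<le> E_term p a b u n"
    using assms(2) by (simp add: E_term_def)
  also have "\<dots> = sum (E_term p a b u) {n}"
    by simp
  also have "\<dots> \<le> (\<Sum>\<^sub>\<infinity>k. E_term p a b u k)"
    using assms by (intro finite_sum_le_infsum E_term_nonneg) (auto simp: Espace_def)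
  finally show ?thesis
    using assms(1-3) by (simp add: Enorm_powr)
qed

lemma abs_le_one_if_Enorm_powr_le:
  assumes "p > 0" "\<And>n. a n \<ge> 0" "b0 > 0" "\<And>n. b n \<ge> b0" "u \<in> Espace p a b"
    and "Enorm p a b u powr p \<le> b0"
  shows "\<bar>u n\<bar> \<le> 1"
proof -
  have "b0 * \<bar>u n\<bar> powr p \<le> b n * \<bar>u n\<bar> powr p"
    using assms(4) by (simp add: mult_right_mono)
  also have "\<dots> \<le> Enorm p a b u powr p"
    using assms(3,4) by (intro b_abs_powr_le_Enorm_powr assms(1,2,5)) (meson less_le_trans less_imp_le)
  also have "\<dots> \<le> b0"
    by (rule assms(6))
  finally have "\<bar>u n\<bar> powr p \<le> 1"
    using assms(3) by simp
  thus ?thesis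
    using gr_one_powr[of "\<bar>u n\<bar>" p] assms(1) by fastforce
qed

lemma log_term_nonpos:
  assumes "\<bar>u n\<bar> \<le> 1" "c n \<ge> 0" "r \<ge> 0"
  shows "log_term q r c u n \<le> 0"
proof (cases "u n = 0")
  case False
  with assms have "ln (\<bar>u n\<bar> powr r) \<le> 0"
    by (simp add: ln_powr mult_nonneg_nonpos)
  with assms(2) show ?thesis
    by (simp add: log_term_def mult_nonneg_nonpos)
qed (simp add: log_term_def)

lemma Enorm_powr_le_Ifun:
  assumes "q > 0" "r \<ge> 0" "\<And>n. c n \<ge> 0" "u \<in> Dspace p q r a b c" "\<And>n. \<bar>u n\<bar> \<le> 1"
  shows "Enorm p a b u powr p / p \<le> Ifun p q r a b c u"
proof -
  have "(\<Sum>\<^sub>\<infinity>n. c n * \<bar>u n\<bar> powr q) \<ge> 0"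
    using assms(3) by (intro infsum_nonneg) simp
  hence "r / q\<^sup>2 * (\<Sum>\<^sub>\<infinity>n. c n * \<bar>u n\<bar> powr q) \<ge> 0"
    using assms(2) by simp
  moreover have "(\<Sum>\<^sub>\<infinity>n. log_term q r c u n) \<le> 0"
    using infsum_nonneg[of UNIV "\<lambda>n. - log_term q r c u n"] log_term_nonpos[OF assms(5,3,2)]
    by (simp add: infsum_uminus)
  hence "1 / q * (\<Sum>\<^sub>\<infinity>n. log_term q r c u n) \<le> 0"
    using assms(1) by (simp add: divide_nonpos_pos)
  ultimately show ?thesis
    by (simp add: Ifun_def)
qed

lemma Ifun_bounded_below_on_sphere:
  assumes "1 < p" "q > 0" "r \<ge> 0" "\<And>n. a n \<ge> 0" "\<And>n. c n \<ge> 0"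
    and "b0 > 0" "\<And>n. b n \<ge> b0"
  shows "\<exists>\<rho>>0. \<exists>\<delta>'>0. \<forall>u\<in>Dspace p q r a b c.
           Enorm p a b u = \<rho> \<longrightarrow> Ifun p q r a b c u \<ge> \<delta>'"
proof (intro exI conjI ballI impI)
  define \<rho> where "\<rho> = min 1 b0"
  show "\<rho> > 0" "\<rho> powr p / p > 0"
    using assms(1,6) by (auto simp: \<rho>_def)
  fix u
  assume u: "u \<in> Dspace p q r a b c" and "Enorm p a b u = \<rho>"
  moreover have "\<rho> powr p \<le> \<rho> powr 1"
    using assms(1,6) by (intro powr_mono') (auto simp: \<rho>_def)
  hence "\<rho> powr p \<le> b0"
    using assms(6) by (simp add: \<rho>_def)
  ultimately have "\<bar>u n\<bar> \<le> 1" for n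
    using assms(1,4,6,7) by (intro abs_le_one_if_Enorm_powr_le[of p a b0 b]) (auto simp: Dspace_def)
  then show "\<rho> powr p / p \<le> Ifun p q r a b c u"
    using Enorm_powr_le_Ifun[OF assms(2,3,5) u] \<open>Enorm p a b u = \<rho>\<close> by simp
qed

definition kronecker :: "int \<Rightarrow> int \<Rightarrow> real" where
  "kronecker m n = (if n = m then 1 else 0)"

lemma scaled_kronecker_in_Dspace_and_Ifun:
  assumes "p > 0" "t > 0" "\<And>n. a n \<ge> 0" "\<And>n. b n \<ge> 0"
  shows "(\<lambda>n. t * kronecker m n) \<in> Dspace p q r a b c"
    and "Ifun p q r a b c (\<lambda>n. t * kronecker m n) =
           (a (m - 1) + a m + b m) * t powr p / p + r / q\<^sup>2 * (c m * t powr q)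
           - 1 / q * (c m * t powr q * (r * ln t))"
proof -
  let ?u = "\<lambda>n. t * kronecker m n"
  have E: "(E_term p a b ?u has_sum (a (m - 1) + a m + b m) * t powr p) UNIV"
    using assms(2)
    by (intro has_sum_finite_neutralI[of "{m - 1, m}"])
       (auto simp: E_term_def fdiff_def kronecker_def algebra_simps)
  have L: "(log_term q r c ?u has_sum c m * t powr q * (r * ln t)) UNIV"
    using assms(2)
    by (intro has_sum_finite_neutralI[of "{m}"]) (auto simp: log_term_def kronecker_def ln_powr)
  have C: "((\<lambda>n. c n * \<bar>?u n\<bar> powr q) has_sum c m * t powr q) UNIV"
    using assms(2) by (intro has_sum_finite_neutralI[of "{m}"]) (auto simp: kronecker_def)
  show "?u \<in> Dspace p q r a b c"
    using has_sum_imp_summable[OF E] has_sum_imp_summable[OF L] by (simp add: Dspace_def Espace_def)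
  show "Ifun p q r a b c ?u =
           (a (m - 1) + a m + b m) * t powr p / p + r / q\<^sup>2 * (c m * t powr q)
           - 1 / q * (c m * t powr q * (r * ln t))"
    using assms infsumI[OF E] infsumI[OF L] infsumI[OF C] by (simp add: Ifun_def Enorm_powr)
qed

lemma Ifun_scaled_kronecker_at_bot:
  assumes "p > 0" "p < q" "r > 0" "c m > 0" "\<And>n. a n \<ge> 0" "\<And>n. b n \<ge> 0"
  shows "filterlim (\<lambda>t. Ifun p q r a b c (\<lambda>n. t * kronecker m n)) at_bot at_top"
proof -
  have eq: "\<forall>\<^sub>F t in at_top. (a (m - 1) + a m + b m) * t powr p / p + r / q\<^sup>2 * (c m * t powr q)
          - 1 / q * (c m * t powr q * (r * ln t)) = Ifun p q r a b c (\<lambda>n. t * kronecker m n)"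
    using eventually_gt_at_top[of 0]
    by eventually_elim (use assms in \<open>simp add: scaled_kronecker_in_Dspace_and_Ifun\<close>)
  have "a (m - 1) + a m + b m \<ge> 0"
    using assms(5,6) by (simp add: add_nonneg_nonneg)
  hence "filterlim (\<lambda>t. (a (m - 1) + a m + b m) * t powr p / p + r / q\<^sup>2 * (c m * t powr q)
          - 1 / q * (c m * t powr q * (r * ln t))) at_bot at_top"
    using assms(1-4) by real_asymp
  with filterlim_cong[OF refl refl eq] show ?thesis
    by blast
qed

theorem lemma4p3:
  fixes p q r :: real and a b c :: "int \<Rightarrow> real"
  assumes "1 < p" and "p < q" and "\<exists>k::nat. k > 0 \<and> p / 2 = real k" and "r \<ge> 1"
    and "\<And>n. a n > 0" and "\<And>n. b n > 0" and "\<And>n. c n > 0"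
    and C1: "\<exists>b0>0. \<forall>n. b n \<ge> b0" "filterlim b at_top cofinite"
    and C2: "\<exists>c0>0. \<forall>n. c n \<le> c0" "c summable_on UNIV"
  shows "(\<exists>\<rho>>0. \<exists>\<delta>'>0. \<forall>u\<in>Dspace p q r a b c.
             Enorm p a b u = \<rho> \<longrightarrow> Ifun p q r a b c u \<ge> \<delta>')
       \<and> (\<exists>\<phi>\<in>Dspace p q r a b c. \<phi> \<noteq> (\<lambda>n. 0) \<and>
             filterlim (\<lambda>t::real. Ifun p q r a b c (\<lambda>n. t * \<phi> n)) at_bot at_top)"
proof
  have a: "\<And>n. a n \<ge> 0" and b: "\<And>n. b n \<ge> 0" and c: "\<And>n. c n \<ge> 0"
    using assms(5-7) less_imp_le by blast+
  obtain b0 where "b0 > 0" "\<And>n. b n \<ge> b0"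
    using C1(1) by blast
  then show "\<exists>\<rho>>0. \<exists>\<delta>'>0. \<forall>u\<in>Dspace p q r a b c.
               Enorm p a b u = \<rho> \<longrightarrow> Ifun p q r a b c u \<ge> \<delta>'"
    using assms(1,2,4) by (intro Ifun_bounded_below_on_sphere a c) auto
  have "kronecker 0 \<in> Dspace p q r a b c"
    using scaled_kronecker_in_Dspace_and_Ifun(1)[of p 1 a b 0] assms(1) a b by simp
  moreover have "kronecker 0 \<noteq> (\<lambda>n. 0)"
    by (metis kronecker_def zero_neq_one)
  moreover have "filterlim (\<lambda>t. Ifun p q r a b c (\<lambda>n. t * kronecker 0 n)) at_bot at_top"
    using assms(1,2,4,7) by (intro Ifun_scaled_kronecker_at_bot a b) auto
  ultimately show "\<exists>\<phi>\<in>Dspace p q r a b c. \<phi> \<noteq> (\<lambda>n. 0) \<and>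
             filterlim (\<lambda>t::real. Ifun p q r a b c (\<lambda>n. t * \<phi> n)) at_bot at_top"
    by blast
qed

end
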